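(* Let $R:\mathbb{N}\to[0,1]$ satisfy $R(n)\to0$. Then there exist numbers $p_1,p_2,\ldots\ge0$ with $\sum_{k\ge1}p_k=1$, two strictly increasing sequences of positive integers $(n_i)_{i\ge1}$ and $(k_i)_{i\ge1}$, and a constant $C\in[\tfrac12,1]$ such that for all $i>1$: (a) $\sum_{k>k_i}p_k\le\frac{1}{n_i}$; (b) $n_ip_{k_i}\le k_i$; (c) $p_{k_i}=CR(n_i)$. *)

theory Defs
  imports Complex_Main
begin

end

theory Submission
  imports Defs
begin

text \<open>
  Pass to a subsequence n_i with n_0 = 1 so sparse that R(n_(i+1)) \<le> 2^-(i+1) / n_i. Put the mass
  R(n_i)/2 at k_i = n_i + 2 and the remaining mass (nonnegative, as the total is at most 1/2 + 1/2)
  at position 1. Everything beyond k_i then weighs at most \<Sum>_m 2^-(m+1) / (2 n_i) = 1/(2 n_i),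
  and C = 1/2.
\<close>

lemma LIMSEQ_zero_sparse_subseq:
  fixes X :: "nat \<Rightarrow> 'a::real_normed_vector" and e :: "nat \<Rightarrow> nat \<Rightarrow> real"
  assumes "X \<longlonglongrightarrow> 0" and "\<And>i m. m \<ge> n\<^sub>0 \<Longrightarrow> e i m > 0"
  shows "\<exists>n. strict_mono n \<and> n 0 = n\<^sub>0 \<and> (\<forall>i. norm (X (n (Suc i))) < e i (n i))"
proof -
  obtain M where M: "\<And>r m. r > 0 \<Longrightarrow> m \<ge> M r \<Longrightarrow> norm (X m) < r"
    using assms(1) unfolding LIMSEQ_iff by (metis diff_zero)
  define n where "n = rec_nat n\<^sub>0 (\<lambda>i m. max (Suc m) (M (e i m)))"
  have n_Suc: "n (Suc i) = max (Suc (n i)) (M (e i (n i)))" for i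
    by (simp add: n_def)
  have "strict_mono n"
    by (simp add: strict_mono_Suc_iff n_Suc less_max_iff_disj)
  moreover have "n\<^sub>0 \<le> n i" for i
    by (induction i) (auto simp: n_def)
  then have "norm (X (n (Suc i))) < e i (n i)" for i
    by (intro M) (simp_all add: assms(2) n_Suc)
  ultimately show ?thesis
    by (auto simp: n_def)
qed

definition place :: "(nat \<Rightarrow> nat) \<Rightarrow> (nat \<Rightarrow> 'a::zero) \<Rightarrow> nat \<Rightarrow> 'a" where
  "place g w j = (if j \<in> range g then w (inv g j) else 0)"

lemma place_at: "inj g \<Longrightarrow> place g w (g m) = w m"
  by (simp add: place_def)

lemma place_outside: "j \<notin> range g \<Longrightarrow> place g w j = 0"
  by (simp add: place_def)

lemma sums_place_iff:
  fixes w :: "nat \<Rightarrow> 'a::real_normed_vector"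
  assumes "strict_mono g"
  shows "place g w sums s \<longleftrightarrow> w sums s"
proof -
  have "(\<lambda>m. place g w (g m)) sums s \<longleftrightarrow> place g w sums s"
    by (rule sums_mono_reindex[OF assms]) (rule place_outside)
  then show ?thesis
    using strict_mono_imp_inj_on[OF assms] by (simp add: place_at)
qed

lemma place_shift:
  assumes g: "strict_mono g" and below: "\<And>m. m < m\<^sub>0 \<Longrightarrow> g m < N" and above: "N \<le> g m\<^sub>0"
  shows "place g w (N + j) = place (\<lambda>m. g (m\<^sub>0 + m) - N) (\<lambda>m. w (m\<^sub>0 + m)) j"
proof -
  let ?g = "\<lambda>m. g (m\<^sub>0 + m) - N"
  have ge: "N \<le> g (m\<^sub>0 + m)" for m
    using above strict_mono_less_eq[OF g, of m\<^sub>0 "m\<^sub>0 + m"] by simp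
  have "strict_mono ?g"
    using g ge by (auto intro!: diff_less_mono simp: strict_mono_Suc_iff)
  then have inj: "inj ?g"
    by (rule strict_mono_imp_inj_on)
  show ?thesis
  proof (cases "N + j \<in> range g")
    case True
    then obtain m where m: "N + j = g m" by auto
    with below have "\<not> m < m\<^sub>0" by fastforce
    then have j: "j = ?g (m - m\<^sub>0)" and m': "m = m\<^sub>0 + (m - m\<^sub>0)"
      using m by simp_all
    have "place g w (N + j) = w m"
      using m place_at[OF strict_mono_imp_inj_on[OF g]] by simp
    also have "\<dots> = place ?g (\<lambda>m. w (m\<^sub>0 + m)) j"
      by (subst j, subst place_at[OF inj]) (use m' in simp)
    finally show ?thesis .
  next
    case False
    then have "j \<notin> range ?g"
      using ge by (auto simp: image_iff)
    with False show ?thesis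
      by (simp add: place_outside)
  qed
qed

lemma sums_place_tail_iff:
  fixes w :: "nat \<Rightarrow> 'a::real_normed_vector"
  assumes g: "strict_mono g" and "\<And>m. m < m\<^sub>0 \<Longrightarrow> g m < N" and "N \<le> g m\<^sub>0"
  shows "(\<lambda>j. place g w (N + j)) sums s \<longleftrightarrow> (\<lambda>m. w (m\<^sub>0 + m)) sums s"
proof -
  have ge: "N \<le> g (m\<^sub>0 + m)" for m
    using assms(3) strict_mono_less_eq[OF g, of m\<^sub>0 "m\<^sub>0 + m"] by simp
  have "strict_mono (\<lambda>m. g (m\<^sub>0 + m) - N)"
    using g ge by (auto intro!: diff_less_mono simp: strict_mono_Suc_iff)
  then show ?thesis
    by (simp add: place_shift[OF assms] sums_place_iff)
qed

lemma halving_tail_le: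
  fixes x :: "nat \<Rightarrow> real" and n :: "nat \<Rightarrow> nat"
  assumes n: "mono n" "\<And>i. 0 < n i"
    and x: "\<And>i. 0 \<le> x (Suc i)" "\<And>i. x (Suc i) \<le> (1/2)^Suc i / n i"
  shows "summable (\<lambda>m. x (Suc i + m))" and "(\<Sum>m. x (Suc i + m)) \<le> 1 / n i"
proof -
  define d where "d m = (1/2::real)^Suc m / n i" for m
  have "(\<lambda>m. (1/2::real)^m * (1 / (2 * n i))) sums (2 * (1 / (2 * n i)))"
    by (intro sums_mult2) (use geometric_sums[of "1/2::real"] in simp)
  moreover have "d = (\<lambda>m. (1/2::real)^m * (1 / (2 * n i)))"
    by (simp add: d_def fun_eq_iff)
  ultimately have d_sums: "d sums (1 / n i)"
    by simp
  have x_le_d: "x (Suc i + m) \<le> d m" for m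
  proof -
    have "x (Suc i + m) \<le> (1/2)^Suc (i + m) / n (i + m)"
      using x(2)[of "i + m"] by simp
    also have "\<dots> \<le> (1/2)^Suc m / n i"
      using n monoD[OF n(1), of i "i + m"]
      by (intro frac_le power_decreasing) (simp_all add: of_nat_mono)
    finally show ?thesis
      by (simp add: d_def)
  qed
  show "summable (\<lambda>m. x (Suc i + m))"
    by (rule summable_comparison_test[OF _ sums_summable[OF d_sums]])
      (use x(1)[of "i + _"] x_le_d in \<open>auto intro!: exI[of _ 0]\<close>)
  then show "(\<Sum>m. x (Suc i + m)) \<le> 1 / n i"
    using suminf_le[OF x_le_d _ sums_summable[OF d_sums]] sums_unique[OF d_sums] by simp
qed

lemma distribution_with_atoms:
  fixes r :: "nat \<Rightarrow> real" and q :: "nat \<Rightarrow> nat"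
  assumes r: "\<And>i. 0 \<le> r i" "r sums S" "S \<le> 1"
    and q: "strict_mono q" "1 < q 0"
  obtains p where "\<And>j. 0 \<le> p j" "(\<lambda>j. p (Suc j)) sums 1" "\<And>i. p (q i) = r i"
    "\<And>i t. (\<lambda>m. r (Suc i + m)) sums t \<Longrightarrow> (\<lambda>j. p (Suc (q i) + j)) sums t"
proof
  define g where "g = case_nat 1 q"
  define w where "w = case_nat (1 - S) r"
  have g: "strict_mono g"
    using q by (auto simp: strict_mono_Suc_iff g_def split: nat.split)
  have "w sums 1"
    using sums_Suc_iff[of w S] r(2) by (simp add: w_def)
  then have "place g w sums 1"
    by (simp add: sums_place_iff[OF g])
  moreover have "0 < g m" for m
    using q(2) strict_mono_less_eq[OF q(1), of 0 "m - 1"] by (cases m) (simp_all add: g_def)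
  then have "place g w 0 = 0"
    by (intro place_outside) (metis imageE less_irrefl)
  ultimately show "(\<lambda>j. place g w (Suc j)) sums 1"
    by (simp add: sums_Suc_iff)
  show "0 \<le> place g w j" for j
    using r by (auto simp: place_def w_def split: nat.split)
  show "place g w (q i) = r i" for i
    using place_at[OF strict_mono_imp_inj_on[OF g], of w "Suc i"] by (simp add: g_def w_def)
  show "(\<lambda>j. place g w (Suc (q i) + j)) sums t" if "(\<lambda>m. r (Suc i + m)) sums t" for i t
  proof -
    have "g m < Suc (q i)" if "m < Suc (Suc i)" for m
      using strict_mono_less_eq[OF g, of m "Suc i"] that by (simp add: g_def)
    moreover have "Suc (q i) \<le> g (Suc (Suc i))"
      using q(1) by (simp add: g_def strict_mono_Suc_iff Suc_le_eq)
    ultimately have "(\<lambda>j. place g w (Suc (q i) + j)) sums t \<longleftrightarrow> (\<lambda>m. w (Suc (Suc i) + m)) sums t"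
      by (rule sums_place_tail_iff[OF g])
    with that show ?thesis
      by (simp add: w_def)
  qed
qed

lemma null_sequence_sparse_subseq:
  fixes R :: "nat \<Rightarrow> real"
  assumes "R \<longlonglongrightarrow> 0" and "\<And>m. 1 \<le> m \<Longrightarrow> 0 \<le> R m"
  obtains n where "strict_mono n" "n 0 = 1"
    "\<And>i. (\<lambda>m. R (n (Suc i + m))) sums (\<Sum>m. R (n (Suc i + m)))"
    "\<And>i. (\<Sum>m. R (n (Suc i + m))) \<le> 1 / n i"
proof -
  obtain n where n: "strict_mono n" "n 0 = 1"
    and n_sparse: "\<And>i. norm (R (n (Suc i))) < (1/2)^Suc i / n i"
    using LIMSEQ_zero_sparse_subseq[OF assms(1), of 1 "\<lambda>i m. (1/2)^Suc i / m"] by auto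
  have n_pos: "0 < n i" for i
    using strict_mono_less_eq[OF n(1), of 0 i] n(2) by simp
  have "0 \<le> R (n i)" for i
    using assms(2) n_pos[of i] by simp
  moreover from this have "R (n (Suc i)) \<le> (1/2)^Suc i / n i" for i
    using n_sparse[of i] by simp
  ultimately show ?thesis
    using halving_tail_le[of n "\<lambda>i. R (n i)", OF strict_mono_mono[OF n(1)] n_pos]
    by (intro that[OF n]) (simp_all add: summable_sums)
qed

lemma distribution_along_sparse_subseq:
  fixes x :: "nat \<Rightarrow> real" and n :: "nat \<Rightarrow> nat"
  assumes n: "strict_mono n" "n 0 = 1"
    and x: "\<And>i. 0 \<le> x i" "x 0 \<le> 1"
    and x_tail: "\<And>i. (\<lambda>m. x (Suc i + m)) sums T i" "\<And>i. T i \<le> 1 / n i"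
  obtains p where "\<And>j. 0 \<le> p j" "(\<lambda>j. p (Suc j)) sums 1" "\<And>i. p (n i + 2) = x i / 2"
    "\<And>i. (\<Sum>j. p (Suc (n i + 2) + j)) \<le> 1 / n i"
proof -
  define r where "r i = x i / 2" for i
  define k where "k i = n i + 2" for i
  have r_tail: "(\<lambda>m. r (Suc i + m)) sums (T i / 2)" for i
    using sums_divide[OF x_tail(1)[of i], of 2] by (simp add: r_def)
  then have "r sums (T 0 / 2 + r 0)"
    using sums_Suc[of r] r_tail[of 0] by simp
  moreover have "T 0 / 2 + r 0 \<le> 1"
    using x_tail(2)[of 0] x(2) n(2) by (simp add: r_def)
  moreover have "strict_mono k"
    using n(1) by (simp add: strict_mono_def k_def)
  ultimately obtain p where p: "\<And>j. 0 \<le> p j" "(\<lambda>j. p (Suc j)) sums 1" "\<And>i. p (k i) = r i"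
    and p_tail: "\<And>i t. (\<lambda>m. r (Suc i + m)) sums t \<Longrightarrow> (\<lambda>j. p (Suc (k i) + j)) sums t"
    using distribution_with_atoms[of r _ k] x(1) by (auto simp: r_def k_def)
  have "(\<Sum>j. p (Suc (k i) + j)) \<le> 1 / n i" for i
  proof -
    have "(\<Sum>j. p (Suc (k i) + j)) = T i / 2"
      using p_tail[OF r_tail] by (simp add: sums_iff)
    also have "\<dots> \<le> 1 / n i"
      using x_tail(2)[of i] strict_mono_less_eq[OF n(1), of 0 i] n(2) by (simp add: divide_simps)
    finally show ?thesis .
  qed
  with p show ?thesis
    by (intro that) (simp_all add: r_def k_def)
qed

theorem mainTheorem14:
  fixes R :: "nat \<Rightarrow> real"
  assumes R_range: "\<forall>n\<ge>1. 0 \<le> R n \<and> R n \<le> 1"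
    and R_lim: "R \<longlonglongrightarrow> 0"
  shows "\<exists>(p :: nat \<Rightarrow> real) (n :: nat \<Rightarrow> nat) (k :: nat \<Rightarrow> nat) (C :: real).
           (\<forall>j\<ge>1. p j \<ge> 0) \<and> (\<lambda>j. p (Suc j)) sums 1 \<and>
           strict_mono_on {1..} n \<and> strict_mono_on {1..} k \<and>
           (\<forall>i\<ge>1. n i > 0 \<and> k i > 0) \<and>
           1/2 \<le> C \<and> C \<le> 1 \<and>
           (\<forall>i>1. (\<Sum>j. p (Suc (k i) + j)) \<le> 1 / real (n i) \<and>
                  real (n i) * p (k i) \<le> real (k i) \<and>
                  p (k i) = C * R (n i))"
proof -
  obtain n where n: "strict_mono n" "n 0 = 1"
    and n_tail: "\<And>i. (\<lambda>m. R (n (Suc i + m))) sums (\<Sum>m. R (n (Suc i + m)))"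
      "\<And>i. (\<Sum>m. R (n (Suc i + m))) \<le> 1 / n i"
    using null_sequence_sparse_subseq[OF R_lim] R_range by blast
  have n_pos: "0 < n i" for i
    using strict_mono_less_eq[OF n(1), of 0 i] n(2) by simp
  have Rn: "0 \<le> R (n i)" "R (n i) \<le> 1" for i
    using R_range n_pos[of i] by auto
  obtain p where p: "\<And>j. 0 \<le> p j" "(\<lambda>j. p (Suc j)) sums 1" "\<And>i. p (n i + 2) = R (n i) / 2"
    "\<And>i. (\<Sum>j. p (Suc (n i + 2) + j)) \<le> 1 / n i"
    using distribution_along_sparse_subseq[where x = "\<lambda>i. R (n i)", OF n _ _ n_tail] Rn by blast
  have "n i * p (n i + 2) \<le> n i + 2" for i
    using mult_left_le[of "p (n i + 2)" "n i"] p(3)[of i] Rn[of i] by simp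
  then show ?thesis
    apply (rule_tac x = p in exI, rule_tac x = n in exI, rule_tac x = "\<lambda>i. n i + 2" in exI,
        rule_tac x = "1/2" in exI)
    using p n_pos n(1) by (auto simp: strict_mono_on_def strict_mono_def)
qed

end
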